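(* For every $\mathcal{ALC}$-formula $\varphi$ and every interpretation $M$, $\mathcal{C}(\varphi,M)\equiv\mathcal{C}_s(\varphi,M)$.
   Context: $\mathcal{ALC}$ concepts: $C::=A\mid\neg C\mid(C\sqcap C)\mid\exists r.C$. $\mathcal{ALC}$-formulae: $\phi::=\alpha\mid\neg\phi\mid(\phi\wedge\phi)$, atomic $\alpha::=C(a)\mid r(a,b)\mid(C=\top)$; $\neg\neg\psi$ identified with $\psi$; $\vee,\bot$ usual abbreviations. A literal is an atomic formula or its negation. Interpretations have a countable nonempty domain with standard semantics; $\equiv$ is logical equivalence (same models). $\mathrm{Sub}(\alpha)=\mathrm{Sub}(\neg\alpha)=\{\alpha,\neg\alpha\}$ for atomic $\alpha$; $\mathrm{Sub}(\psi\wedge\psi')=\mathrm{Sub}(\neg(\psi\wedge\psi'))=\{\psi\wedge\psi',\neg(\psi\wedge\psi')\}\cup\mathrm{Sub}(\psi)\cup\mathrm{Sub}(\psi')$. $\mathrm{con}(\varphi)$: smallest set of concepts containing $C$ whenever $(C=\top)$ or $C(a)$ is in $\mathrm{Sub}(\varphi)$, closed under subconcepts of $\sqcap$ and $\exists r.\cdot$ and under single negation. $\mathrm{ind}(\varphi)$: individual names in $\varphi$. Concept type for $\varphi$: $c\subseteq\mathrm{con}(\varphi)$ with $D\in c$ iff $\neg D\notin c$ and $D\sqcap E\in c$ iff $\{D,E\}\subseteq c$. Formula type for $\varphi$: $f\subseteq\mathrm{Sub}(\varphi)$ with $\psi\in f$ iff $\neg\psi\notin f$ and $\psi\wedge\psi'\in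 f$ iff $\{\psi,\psi'\}\subseteq f$ (for members of $\mathrm{Sub}(\varphi)$). Model candidate $(T,o,f)$: $T$ set of concept types, $o:\mathrm{ind}(\varphi)\to T$, $f$ formula type, $\varphi\in f$, $C(a)\in f\Rightarrow C\in o(a)$, $r(a,b)\in f\Rightarrow\{\neg C\mid\neg\exists r.C\in o(a)\}\subseteq o(b)$. Quasimodel: model candidate where each $\exists r.D\in c\in T$ has $c'\in T$ with $\{D\}\cup\{\neg E\mid\neg\exists r.E\in c\}\subseteq c'$; $\neg C\in c\in T$ implies $(C=\top)\notin f$; $\neg(C=\top)\in f$ implies some $c\in T$ with $C\notin c$; $T\neq\emptyset$. $\mathrm{ftypes}(\varphi)=\{f\mid(T,o,f)$ quasimodel for $\varphi\}$. For interpretation $I$: $\mathrm{qm}(\varphi,I)=(T,o,f)$ with $T=\{c(x)\mid x\in\Delta^I\}$, $c(x)=\{C\in\mathrm{con}(\varphi)\mid x\in C^I\}$, $o(a)=c(a^I)$, $f=\{\psi\in\mathrm{Sub}(\varphi)\mid I\models\psi\}$. $\mathrm{lit}(f)$: literals in $f$. $\mathrm{qfilter}(\varphi,M)=\mathrm{ftypes}(\varphi)\setminus\{f\}$ where $\mathrm{qm}(\varphi,M)=(T,o,f)$. $\mathcal{C}(\varphi,M)=\bigvee_{f\in\mathrm{qfilter}(\varphi,M)}\bigwedge\mathrm{lit}(f)$ if $M\models\varphi$ and $\mathrm{qfilter}(\varphi,M)\ne\emptyset$; $\bot$ if $M\models\varphi$ and $\mathrm{qfilter}(\varphi,M)=\emptyset$;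 $\varphi$ otherwise. $\mathcal{C}_s(\varphi,M)=\varphi\wedge\neg(\bigwedge\mathrm{lit}(f))$ if $M\models\varphi$, where $\mathrm{qm}(\varphi,M)=(T,o,f)$; and $\mathcal{C}_s(\varphi,M)=\varphi$ otherwise. *)

theory Defs
  imports Main "HOL-Library.Countable_Set"
begin

datatype ('c,'r) concept =
    CName 'c
  | CNeg "('c,'r) concept"
  | CAnd "('c,'r) concept" "('c,'r) concept"
  | CEx 'r "('c,'r) concept"

datatype ('c,'r,'i) atom =
    CAss "('c,'r) concept" 'i
  | RAss 'r 'i 'i
  | TopAx "('c,'r) concept"

datatype ('c,'r,'i) formula =
    Atom "('c,'r,'i) atom"
  | FNeg "('c,'r,'i) formula"
  | FAnd "('c,'r,'i) formula" "('c,'r,'i) formula"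

text \<open>Single negation, identifying double negations (neg neg psi = psi).\<close>
definition cneg :: "('c,'r) concept \<Rightarrow> ('c,'r) concept" where
  "cneg C = (case C of CNeg D \<Rightarrow> D | _ \<Rightarrow> CNeg C)"

definition fneg :: "('c,'r,'i) formula \<Rightarrow> ('c,'r,'i) formula" where
  "fneg \<psi> = (case \<psi> of FNeg \<chi> \<Rightarrow> \<chi> | _ \<Rightarrow> FNeg \<psi>)"

fun fnorm :: "('c,'r,'i) formula \<Rightarrow> ('c,'r,'i) formula" where
  "fnorm (Atom \<alpha>) = Atom \<alpha>"
| "fnorm (FNeg \<psi>) = fneg (fnorm \<psi>)"
| "fnorm (FAnd \<psi> \<chi>) = FAnd (fnorm \<psi>) (fnorm \<chi>)"

definition fbot :: "('c,'r,'i) formula" where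
  "fbot = FAnd (Atom (TopAx (CName undefined))) (FNeg (Atom (TopAx (CName undefined))))"

definition ftop :: "('c,'r,'i) formula" where
  "ftop = FNeg fbot"

definition FOr :: "('c,'r,'i) formula \<Rightarrow> ('c,'r,'i) formula \<Rightarrow> ('c,'r,'i) formula" where
  "FOr \<psi> \<chi> = FNeg (FAnd (FNeg \<psi>) (FNeg \<chi>))"

fun bigAnd_list :: "('c,'r,'i) formula list \<Rightarrow> ('c,'r,'i) formula" where
  "bigAnd_list [] = ftop"
| "bigAnd_list [\<psi>] = \<psi>"
| "bigAnd_list (\<psi> # \<psi>s) = FAnd \<psi> (bigAnd_list \<psi>s)"

fun bigOr_list :: "('c,'r,'i) formula list \<Rightarrow> ('c,'r,'i) formula" where
  "bigOr_list [] = fbot"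
| "bigOr_list [\<psi>] = \<psi>"
| "bigOr_list (\<psi> # \<psi>s) = FOr \<psi> (bigOr_list \<psi>s)"

definition bigAnd :: "('c,'r,'i) formula set \<Rightarrow> ('c,'r,'i) formula" where
  "bigAnd S = bigAnd_list (SOME xs. set xs = S \<and> distinct xs)"

definition bigOr :: "('c,'r,'i) formula set \<Rightarrow> ('c,'r,'i) formula" where
  "bigOr S = bigOr_list (SOME xs. set xs = S \<and> distinct xs)"

record ('c,'r,'i,'d) interp =
  dom :: "'d set"
  cI  :: "'c \<Rightarrow> 'd set"
  rI  :: "'r \<Rightarrow> ('d \<times> 'd) set"
  iI  :: "'i \<Rightarrow> 'd"

definition is_interp :: "('c,'r,'i,'d,'x) interp_scheme \<Rightarrow> bool" where
  "is_interp I \<longleftrightarrow> countable (dom I) \<and> dom I \<noteq> {}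
     \<and> (\<forall>A. cI I A \<subseteq> dom I) \<and> (\<forall>r. rI I r \<subseteq> dom I \<times> dom I)
     \<and> (\<forall>a. iI I a \<in> dom I)"

fun cext :: "('c,'r,'i,'d,'x) interp_scheme \<Rightarrow> ('c,'r) concept \<Rightarrow> 'd set" where
  "cext I (CName A) = cI I A"
| "cext I (CNeg C) = dom I - cext I C"
| "cext I (CAnd C D) = cext I C \<inter> cext I D"
| "cext I (CEx r C) = {x \<in> dom I. \<exists>y. (x, y) \<in> rI I r \<and> y \<in> cext I C}"

fun asat :: "('c,'r,'i,'d,'x) interp_scheme \<Rightarrow> ('c,'r,'i) atom \<Rightarrow> bool" where
  "asat I (CAss C a) \<longleftrightarrow> iI I a \<in> cext I C"
| "asat I (RAss r a b) \<longleftrightarrow> (iI I a, iI I b) \<in> rI I r"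
| "asat I (TopAx C) \<longleftrightarrow> cext I C = dom I"

fun fsat :: "('c,'r,'i,'d,'x) interp_scheme \<Rightarrow> ('c,'r,'i) formula \<Rightarrow> bool" where
  "fsat I (Atom \<alpha>) \<longleftrightarrow> asat I \<alpha>"
| "fsat I (FNeg \<psi>) \<longleftrightarrow> \<not> fsat I \<psi>"
| "fsat I (FAnd \<psi> \<chi>) \<longleftrightarrow> fsat I \<psi> \<and> fsat I \<chi>"

text \<open>Logical equivalence: same models. Every interpretation with a countable
  nonempty domain is isomorphic to one whose domain is a subset of nat.\<close>
definition fequiv :: "('c,'r,'i) formula \<Rightarrow> ('c,'r,'i) formula \<Rightarrow> bool" where
  "fequiv \<psi> \<chi> \<longleftrightarrow> (\<forall>I :: ('c,'r,'i,nat) interp. is_interp I \<longrightarrow> (fsat I \<psi> \<longleftrightarrow> fsat I \<chi>))"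

fun Sub :: "('c,'r,'i) formula \<Rightarrow> ('c,'r,'i) formula set" where
  "Sub (Atom \<alpha>) = {Atom \<alpha>, FNeg (Atom \<alpha>)}"
| "Sub (FNeg \<psi>) = Sub \<psi>"
| "Sub (FAnd \<psi> \<chi>) = {fnorm (FAnd \<psi> \<chi>), fneg (fnorm (FAnd \<psi> \<chi>))} \<union> Sub \<psi> \<union> Sub \<chi>"

inductive_set con :: "('c,'r,'i) formula \<Rightarrow> ('c,'r) concept set" for \<phi> where
  con_top: "Atom (TopAx C) \<in> Sub \<phi> \<Longrightarrow> C \<in> con \<phi>"
| con_ass: "Atom (CAss C a) \<in> Sub \<phi> \<Longrightarrow> C \<in> con \<phi>"
| con_and1: "CAnd C D \<in> con \<phi> \<Longrightarrow> C \<in> con \<phi>"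
| con_and2: "CAnd C D \<in> con \<phi> \<Longrightarrow> D \<in> con \<phi>"
| con_ex: "CEx r C \<in> con \<phi> \<Longrightarrow> C \<in> con \<phi>"
| con_negsub: "CNeg C \<in> con \<phi> \<Longrightarrow> C \<in> con \<phi>"
| con_neg: "C \<in> con \<phi> \<Longrightarrow> cneg C \<in> con \<phi>"

fun ind_atom :: "('c,'r,'i) atom \<Rightarrow> 'i set" where
  "ind_atom (CAss C a) = {a}"
| "ind_atom (RAss r a b) = {a, b}"
| "ind_atom (TopAx C) = {}"

fun ind :: "('c,'r,'i) formula \<Rightarrow> 'i set" where
  "ind (Atom \<alpha>) = ind_atom \<alpha>"
| "ind (FNeg \<psi>) = ind \<psi>"
| "ind (FAnd \<psi> \<chi>) = ind \<psi> \<union> ind \<chi>"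

definition concept_type :: "('c,'r,'i) formula \<Rightarrow> ('c,'r) concept set \<Rightarrow> bool" where
  "concept_type \<phi> c \<longleftrightarrow> c \<subseteq> con \<phi>
     \<and> (\<forall>D \<in> con \<phi>. D \<in> c \<longleftrightarrow> cneg D \<notin> c)
     \<and> (\<forall>D E. CAnd D E \<in> con \<phi> \<longrightarrow> (CAnd D E \<in> c \<longleftrightarrow> D \<in> c \<and> E \<in> c))"

definition formula_type :: "('c,'r,'i) formula \<Rightarrow> ('c,'r,'i) formula set \<Rightarrow> bool" where
  "formula_type \<phi> f \<longleftrightarrow> f \<subseteq> Sub \<phi>
     \<and> (\<forall>\<psi> \<in> Sub \<phi>. \<psi> \<in> f \<longleftrightarrow> fneg \<psi> \<notin> f)
     \<and> (\<forall>\<psi> \<chi>. FAnd \<psi> \<chi> \<in> Sub \<phi> \<longrightarrow> (FAnd \<psi> \<chi> \<in> f \<longleftrightarrow> \<psi> \<in> f \<and> \<chi> \<in> f))"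

definition model_candidate :: "('c,'r,'i) formula \<Rightarrow> ('c,'r) concept set set
     \<Rightarrow> ('i \<Rightarrow> ('c,'r) concept set) \<Rightarrow> ('c,'r,'i) formula set \<Rightarrow> bool" where
  "model_candidate \<phi> T ov f \<longleftrightarrow>
     (\<forall>c \<in> T. concept_type \<phi> c)
     \<and> (\<forall>a \<in> ind \<phi>. ov a \<in> T)
     \<and> formula_type \<phi> f
     \<and> fnorm \<phi> \<in> f
     \<and> (\<forall>C a. Atom (CAss C a) \<in> f \<longrightarrow> C \<in> ov a)
     \<and> (\<forall>r a b. Atom (RAss r a b) \<in> f \<longrightarrow>
          {cneg C | C. cneg (CEx r C) \<in> ov a} \<subseteq> ov b)"

definition quasimodel :: "('c,'r,'i) formula \<Rightarrow> ('c,'r) concept set set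
     \<Rightarrow> ('i \<Rightarrow> ('c,'r) concept set) \<Rightarrow> ('c,'r,'i) formula set \<Rightarrow> bool" where
  "quasimodel \<phi> T ov f \<longleftrightarrow>
     model_candidate \<phi> T ov f
     \<and> (\<forall>c \<in> T. \<forall>r D. CEx r D \<in> c \<longrightarrow>
          (\<exists>c' \<in> T. {D} \<union> {cneg E | E. cneg (CEx r E) \<in> c} \<subseteq> c'))
     \<and> (\<forall>c \<in> T. \<forall>C. cneg C \<in> c \<longrightarrow> Atom (TopAx C) \<notin> f)
     \<and> (\<forall>C. FNeg (Atom (TopAx C)) \<in> f \<longrightarrow> (\<exists>c \<in> T. C \<notin> c))
     \<and> T \<noteq> {}"

definition ftypes :: "('c,'r,'i) formula \<Rightarrow> ('c,'r,'i) formula set set" where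
  "ftypes \<phi> = {f. \<exists>T ov. quasimodel \<phi> T ov f}"

definition ctype_of :: "('c,'r,'i) formula \<Rightarrow> ('c,'r,'i,'d,'x) interp_scheme \<Rightarrow> 'd \<Rightarrow> ('c,'r) concept set" where
  "ctype_of \<phi> I x = {C \<in> con \<phi>. x \<in> cext I C}"

definition qm_T :: "('c,'r,'i) formula \<Rightarrow> ('c,'r,'i,'d,'x) interp_scheme \<Rightarrow> ('c,'r) concept set set" where
  "qm_T \<phi> I = ctype_of \<phi> I ` dom I"

definition qm_o :: "('c,'r,'i) formula \<Rightarrow> ('c,'r,'i,'d,'x) interp_scheme \<Rightarrow> 'i \<Rightarrow> ('c,'r) concept set" where
  "qm_o \<phi> I a = ctype_of \<phi> I (iI I a)"

definition qm_f :: "('c,'r,'i) formula \<Rightarrow> ('c,'r,'i,'d,'x) interp_scheme \<Rightarrow> ('c,'r,'i) formula set" where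
  "qm_f \<phi> I = {\<psi> \<in> Sub \<phi>. fsat I \<psi>}"

definition is_literal :: "('c,'r,'i) formula \<Rightarrow> bool" where
  "is_literal \<psi> \<longleftrightarrow> (\<exists>\<alpha>. \<psi> = Atom \<alpha> \<or> \<psi> = FNeg (Atom \<alpha>))"

definition lit :: "('c,'r,'i) formula set \<Rightarrow> ('c,'r,'i) formula set" where
  "lit f = {\<psi> \<in> f. is_literal \<psi>}"

definition qfilter :: "('c,'r,'i) formula \<Rightarrow> ('c,'r,'i,'d,'x) interp_scheme \<Rightarrow> ('c,'r,'i) formula set set" where
  "qfilter \<phi> M = ftypes \<phi> - {qm_f \<phi> M}"

definition contraction :: "('c,'r,'i) formula \<Rightarrow> ('c,'r,'i,'d,'x) interp_scheme \<Rightarrow> ('c,'r,'i) formula" where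
  "contraction \<phi> M =
     (if fsat M \<phi> then
        (if qfilter \<phi> M \<noteq> {} then bigOr ((\<lambda>f. bigAnd (lit f)) ` qfilter \<phi> M) else fbot)
      else \<phi>)"

definition contraction_s :: "('c,'r,'i) formula \<Rightarrow> ('c,'r,'i,'d,'x) interp_scheme \<Rightarrow> ('c,'r,'i) formula" where
  "contraction_s \<phi> M =
     (if fsat M \<phi> then FAnd \<phi> (FNeg (bigAnd (lit (qm_f \<phi> M)))) else \<phi>)"

end

theory Submission
  imports Defs
begin

text \<open>A formula type f is pinned down by its literals: the conjunction of lit f holds in
  I exactly when f is the type qm_f \<phi> I realised by I. Moreover the type realised by I
  belongs to ftypes \<phi> iff I satisfies \<phi>, since the concept types of the elements of a
  model of \<phi> form a quasimodel. So, for M a model of \<phi>, both contractions hold in I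
  exactly when I is a model of \<phi> realising a type other than that of M.\<close>

lemma fneg_FNeg [simp]: "fneg (FNeg \<psi>) = \<psi>"
  by (simp add: fneg_def)

lemma fneg_Atom [simp]: "fneg (Atom \<alpha>) = FNeg (Atom \<alpha>)"
  by (simp add: fneg_def)

lemma fsat_fneg [simp]: "fsat I (fneg \<psi>) \<longleftrightarrow> \<not> fsat I \<psi>"
  by (cases \<psi>) (auto simp: fneg_def)

lemma fsat_fnorm [simp]: "fsat I (fnorm \<psi>) \<longleftrightarrow> fsat I \<psi>"
  by (induction \<psi>) auto

lemma fsat_fbot [simp]: "\<not> fsat I fbot"
  by (simp add: fbot_def)

lemma fsat_ftop [simp]: "fsat I ftop"
  by (simp add: ftop_def)

lemma fsat_bigAnd_list: "fsat I (bigAnd_list \<psi>s) \<longleftrightarrow> (\<forall>\<psi>\<in>set \<psi>s. fsat I \<psi>)"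
  by (induction \<psi>s rule: bigAnd_list.induct) auto

lemma fsat_bigOr_list: "fsat I (bigOr_list \<psi>s) \<longleftrightarrow> (\<exists>\<psi>\<in>set \<psi>s. fsat I \<psi>)"
  by (induction \<psi>s rule: bigOr_list.induct) (auto simp: FOr_def)

lemma set_some_distinct_enumeration:
  "finite S \<Longrightarrow> set (SOME xs. set xs = S \<and> distinct xs) = S"
  by (metis (mono_tags, lifting) finite_distinct_list someI_ex)

lemma fsat_bigAnd: "finite S \<Longrightarrow> fsat I (bigAnd S) \<longleftrightarrow> (\<forall>\<psi>\<in>S. fsat I \<psi>)"
  by (simp add: bigAnd_def fsat_bigAnd_list set_some_distinct_enumeration)

lemma fsat_bigOr: "finite S \<Longrightarrow> fsat I (bigOr S) \<longleftrightarrow> (\<exists>\<psi>\<in>S. fsat I \<psi>)"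
  by (simp add: bigOr_def fsat_bigOr_list set_some_distinct_enumeration)

lemma finite_Sub: "finite (Sub \<phi>)"
  by (induction \<phi>) auto

lemma fneg_in_Sub: "\<psi> \<in> Sub \<phi> \<Longrightarrow> fneg \<psi> \<in> Sub \<phi>"
  by (induction \<phi>) (auto simp: fneg_def)

lemma FNeg_in_SubD: "FNeg \<psi> \<in> Sub \<phi> \<Longrightarrow> \<psi> \<in> Sub \<phi>"
  using fneg_in_Sub by fastforce

lemma fnorm_in_Sub: "fnorm \<phi> \<in> Sub \<phi>"
  by (induction \<phi>) (auto intro: fneg_in_Sub)

lemma FAnd_in_SubD: "FAnd \<psi> \<chi> \<in> Sub \<phi> \<Longrightarrow> \<psi> \<in> Sub \<phi> \<and> \<chi> \<in> Sub \<phi>"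
  by (induction \<phi>) (use fnorm_in_Sub in \<open>auto simp: fneg_def\<close>)

lemma formula_type_qm_f: "formula_type \<phi> (qm_f \<phi> I)"
  unfolding formula_type_def qm_f_def by (auto dest: fneg_in_Sub FAnd_in_SubD)

lemma formula_type_eq_qm_f_if_lits_hold:
  assumes f: "formula_type \<phi> f" and lits: "\<forall>\<psi>\<in>lit f. fsat I \<psi>"
  shows "f = qm_f \<phi> I"
proof -
  have "\<psi> \<in> f \<longleftrightarrow> fsat I \<psi>" if "\<psi> \<in> Sub \<phi>" for \<psi>
    using that
  proof (induction \<psi>)
    case (Atom \<alpha>)
    then have "Atom \<alpha> \<in> f \<longleftrightarrow> FNeg (Atom \<alpha>) \<notin> f"
      using f by (auto simp: formula_type_def)
    with lits show ?case by (auto simp: lit_def is_literal_def)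
  next
    case (FNeg \<chi>)
    then have "FNeg \<chi> \<in> f \<longleftrightarrow> \<chi> \<notin> f"
      using f unfolding formula_type_def by (metis fneg_FNeg)
    with FNeg show ?case by (auto dest: FNeg_in_SubD)
  next
    case (FAnd \<chi>1 \<chi>2)
    then have "FAnd \<chi>1 \<chi>2 \<in> f \<longleftrightarrow> \<chi>1 \<in> f \<and> \<chi>2 \<in> f"
      using f unfolding formula_type_def by blast
    with FAnd show ?case by (auto dest: FAnd_in_SubD)
  qed
  moreover have "f \<subseteq> Sub \<phi>"
    using f by (simp add: formula_type_def)
  ultimately show ?thesis
    by (auto simp: qm_f_def)
qed

lemma fsat_bigAnd_lit_iff:
  assumes f: "formula_type \<phi> f"
  shows "fsat I (bigAnd (lit f)) \<longleftrightarrow> f = qm_f \<phi> I"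
proof -
  have "lit f \<subseteq> Sub \<phi>"
    using f by (auto simp: formula_type_def lit_def)
  then have "finite (lit f)"
    using finite_Sub finite_subset by blast
  then show ?thesis
    using formula_type_eq_qm_f_if_lits_hold[OF f, of I]
    by (auto simp: fsat_bigAnd lit_def qm_f_def)
qed

lemma cext_subset_dom: "is_interp I \<Longrightarrow> cext I C \<subseteq> dom I"
  by (induction C) (auto simp: is_interp_def)

lemma cext_cneg:
  assumes "is_interp I"
  shows "cext I (cneg C) = dom I - cext I C"
proof (cases C)
  case (CNeg D)
  then show ?thesis
    using cext_subset_dom[OF assms, of D] by (auto simp: cneg_def)
qed (simp_all add: cneg_def)

lemma cneg_in_con_if_cneg_CEx:
  assumes "cneg (CEx r C) \<in> con \<phi>"
  shows "cneg C \<in> con \<phi>"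
proof -
  have "CEx r C \<in> con \<phi>"
    using assms by (simp add: cneg_def con.con_negsub)
  then show ?thesis
    by (rule con.con_neg[OF con.con_ex])
qed

lemma concept_type_ctype_of:
  assumes I: "is_interp I" and x: "x \<in> dom I"
  shows "concept_type \<phi> (ctype_of \<phi> I x)"
proof -
  have "D \<in> ctype_of \<phi> I x \<longleftrightarrow> cneg D \<notin> ctype_of \<phi> I x" if "D \<in> con \<phi>" for D
    using that con.con_neg[OF that] cext_cneg[OF I, of D] x by (auto simp: ctype_of_def)
  moreover have "CAnd D E \<in> ctype_of \<phi> I x \<longleftrightarrow> D \<in> ctype_of \<phi> I x \<and> E \<in> ctype_of \<phi> I x"
    if "CAnd D E \<in> con \<phi>" for D E
    using that con.con_and1[OF that] con.con_and2[OF that] by (simp add: ctype_of_def)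
  moreover have "ctype_of \<phi> I x \<subseteq> con \<phi>"
    by (auto simp: ctype_of_def)
  ultimately show ?thesis
    unfolding concept_type_def by blast
qed

lemma cneg_in_ctype_of_successor:
  assumes I: "is_interp I" and xy: "(x, y) \<in> rI I r"
    and E: "cneg (CEx r E) \<in> ctype_of \<phi> I x"
  shows "cneg E \<in> ctype_of \<phi> I y"
proof -
  have "x \<notin> cext I (CEx r E)"
    using E cext_cneg[OF I] by (auto simp: ctype_of_def)
  then have "y \<notin> cext I E"
    using xy I by (auto simp: is_interp_def)
  moreover have "y \<in> dom I"
    using xy I by (auto simp: is_interp_def)
  ultimately show ?thesis
    using E cext_cneg[OF I, of E] cneg_in_con_if_cneg_CEx by (auto simp: ctype_of_def)
qed

lemma model_candidate_qm:
  assumes I: "is_interp I" and sat: "fsat I \<phi>"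
  shows "model_candidate \<phi> (qm_T \<phi> I) (qm_o \<phi> I) (qm_f \<phi> I)"
  unfolding model_candidate_def
proof (intro conjI allI impI ballI)
  show "concept_type \<phi> c" if "c \<in> qm_T \<phi> I" for c
    using that concept_type_ctype_of[OF I] by (auto simp: qm_T_def)
  show "qm_o \<phi> I a \<in> qm_T \<phi> I" for a
    using I by (auto simp: qm_T_def qm_o_def is_interp_def)
  show "formula_type \<phi> (qm_f \<phi> I)"
    by (rule formula_type_qm_f)
  show "fnorm \<phi> \<in> qm_f \<phi> I"
    using sat fnorm_in_Sub by (auto simp: qm_f_def)
  show "C \<in> qm_o \<phi> I a" if "Atom (CAss C a) \<in> qm_f \<phi> I" for C a
    using that by (auto simp: qm_f_def qm_o_def ctype_of_def intro: con.con_ass)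
  show "{cneg C | C. cneg (CEx r C) \<in> qm_o \<phi> I a} \<subseteq> qm_o \<phi> I b"
    if "Atom (RAss r a b) \<in> qm_f \<phi> I" for r a b
    using that cneg_in_ctype_of_successor[OF I] by (auto simp: qm_f_def qm_o_def)
qed

lemma quasimodel_qm:
  assumes I: "is_interp I" and sat: "fsat I \<phi>"
  shows "quasimodel \<phi> (qm_T \<phi> I) (qm_o \<phi> I) (qm_f \<phi> I)"
  unfolding quasimodel_def
proof (intro conjI ballI allI impI)
  show "model_candidate \<phi> (qm_T \<phi> I) (qm_o \<phi> I) (qm_f \<phi> I)"
    using I sat by (rule model_candidate_qm)
next
  fix c r D
  assume "c \<in> qm_T \<phi> I" and D: "CEx r D \<in> c"
  then obtain x where x: "x \<in> dom I" and c: "c = ctype_of \<phi> I x"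
    by (auto simp: qm_T_def)
  then obtain y where xy: "(x, y) \<in> rI I r" and y: "y \<in> cext I D"
    using D by (auto simp: ctype_of_def)
  have "D \<in> ctype_of \<phi> I y"
    using D c y con.con_ex by (auto simp: ctype_of_def)
  moreover have "y \<in> dom I"
    using xy I by (auto simp: is_interp_def)
  ultimately show "\<exists>c' \<in> qm_T \<phi> I. {D} \<union> {cneg E | E. cneg (CEx r E) \<in> c} \<subseteq> c'"
    using c cneg_in_ctype_of_successor[OF I xy] by (auto simp: qm_T_def)
next
  fix c C
  assume "c \<in> qm_T \<phi> I" and "cneg C \<in> c"
  then show "Atom (TopAx C) \<notin> qm_f \<phi> I"
    using cext_cneg[OF I, of C] by (auto simp: qm_T_def qm_f_def ctype_of_def)
next
  fix C
  assume "FNeg (Atom (TopAx C)) \<in> qm_f \<phi> I"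
  then obtain x where "x \<in> dom I" and "x \<notin> cext I C"
    using cext_subset_dom[OF I, of C] by (auto simp: qm_f_def)
  then show "\<exists>c \<in> qm_T \<phi> I. C \<notin> c"
    by (auto simp: qm_T_def ctype_of_def)
next
  show "qm_T \<phi> I \<noteq> {}"
    using I by (auto simp: qm_T_def is_interp_def)
qed

lemma formula_type_if_in_ftypes: "f \<in> ftypes \<phi> \<Longrightarrow> formula_type \<phi> f"
  by (auto simp: ftypes_def quasimodel_def model_candidate_def)

lemma qm_f_in_ftypes_iff:
  assumes "is_interp I"
  shows "qm_f \<phi> I \<in> ftypes \<phi> \<longleftrightarrow> fsat I \<phi>"
proof
  assume "qm_f \<phi> I \<in> ftypes \<phi>"
  then have "fnorm \<phi> \<in> qm_f \<phi> I"
    by (auto simp: ftypes_def quasimodel_def model_candidate_def)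
  then show "fsat I \<phi>"
    by (simp add: qm_f_def)
next
  assume "fsat I \<phi>"
  then show "qm_f \<phi> I \<in> ftypes \<phi>"
    using quasimodel_qm[OF assms] by (auto simp: ftypes_def)
qed

lemma finite_ftypes: "finite (ftypes \<phi>)"
proof -
  have "ftypes \<phi> \<subseteq> Pow (Sub \<phi>)"
    using formula_type_if_in_ftypes unfolding formula_type_def by blast
  then show ?thesis
    using finite_Sub finite_subset by blast
qed

lemma fsat_contraction_iff:
  assumes "fsat M \<phi>"
  shows "fsat I (contraction \<phi> M) \<longleftrightarrow> qm_f \<phi> I \<in> qfilter \<phi> M"
proof -
  have "finite (qfilter \<phi> M)"
    using finite_ftypes by (simp add: qfilter_def)
  then have "fsat I (contraction \<phi> M) \<longleftrightarrow> (\<exists>f\<in>qfilter \<phi> M. fsat I (bigAnd (lit f)))"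
    using assms by (simp add: contraction_def fsat_bigOr)
  also have "\<dots> \<longleftrightarrow> (\<exists>f\<in>qfilter \<phi> M. f = qm_f \<phi> I)"
  proof (rule bex_cong[OF refl])
    fix f
    assume "f \<in> qfilter \<phi> M"
    then show "fsat I (bigAnd (lit f)) \<longleftrightarrow> f = qm_f \<phi> I"
      by (simp add: qfilter_def fsat_bigAnd_lit_iff formula_type_if_in_ftypes)
  qed
  finally show ?thesis
    by simp
qed

lemma fsat_contraction_s_iff:
  assumes I: "is_interp I" and "fsat M \<phi>"
  shows "fsat I (contraction_s \<phi> M) \<longleftrightarrow> qm_f \<phi> I \<in> qfilter \<phi> M"
proof -
  have "fsat I (contraction_s \<phi> M) \<longleftrightarrow> fsat I \<phi> \<and> \<not> fsat I (bigAnd (lit (qm_f \<phi> M)))"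
    using assms(2) by (simp add: contraction_s_def)
  also have "\<dots> \<longleftrightarrow> qm_f \<phi> I \<in> ftypes \<phi> \<and> qm_f \<phi> M \<noteq> qm_f \<phi> I"
    by (simp only: qm_f_in_ftypes_iff[OF I] fsat_bigAnd_lit_iff[OF formula_type_qm_f])
  finally show ?thesis
    unfolding qfilter_def by blast
qed

theorem mainTheorem4:
  fixes \<phi> :: "('c,'r,'i) formula" and M :: "('c,'r,'i,'d) interp"
  assumes "is_interp M"
  shows "fequiv (contraction \<phi> M) (contraction_s \<phi> M)"
  unfolding fequiv_def
proof (intro allI impI)
  fix I :: "('c,'r,'i,nat) interp"
  assume I: "is_interp I"
  show "fsat I (contraction \<phi> M) \<longleftrightarrow> fsat I (contraction_s \<phi> M)"
  proof (cases "fsat M \<phi>")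
    case True
    then show ?thesis
      by (simp only: fsat_contraction_iff[OF True] fsat_contraction_s_iff[OF I True])
  next
    case False
    then show ?thesis
      by (simp add: contraction_def contraction_s_def)
  qed
qed

end
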